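(* Let $R$ be a commutative ring, $S$ a subring of $R$, $I$ an ideal of $S$, $n\ge1$, and $f\in(T_n(R))[x]$. Then \[f\in\mathrm{Int}_{T_n(R)}(T_n(S),T_n(I))\iff f_{ij}\in\mathrm{Int}_R(T_{n-j+1}(S),T_{n-j+1}(I))\text{ for all }1\le i\le j\le n,\] and \[f\in\mathrm{Int}^{\ell}_{T_n(R)}(T_n(S),T_n(I))\iff f_{ij}\in\mathrm{Int}_R(T_{i}(S),T_{i}(I))\text{ for all }1\le i\le j\le n.\]
   Context: $T_n(A)$ denotes the ring of upper triangular $n\times n$ matrices over a ring $A$. For $f=\sum_k F_kx^k\in(T_n(R))[x]$ with $F_k\in T_n(R)$, right substitution is $f(C)=\sum_kF_kC^k$ and left substitution is $f(C)_\ell=\sum_kC^kF_k$. Writing $f_{ij}^{(k)}$ for the $(i,j)$-entry of $F_k$, set $f_{ij}=\sum_k f_{ij}^{(k)}x^k\in R[x]$ (so $f_{ij}=0$ for $i>j$). Definitions: $\mathrm{Int}_R(T_m(S),T_m(I))=\{g\in R[x]\mid \forall C\in T_m(S):\ g(C)\in T_m(I)\}$ (usual evaluation); $\mathrm{Int}_{T_n(R)}(T_n(S),T_n(I))=\{f\in(T_n(R))[x]\mid\forall C\in T_n(S):\ f(C)\in T_n(I)\}$; $\mathrm{Int}^{\ell}_{T_n(R)}(T_n(S),T_n(I))=\{f\in(T_n(R))[x]\mid\forall C\in T_n(S):\ f(C)_\ell\in T_n(I)\}$. *)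

theory Defs
  imports "Jordan_Normal_Form.Matrix" "HOL-Computational_Algebra.Polynomial"
begin

text \<open>Matrices are 0-indexed (JNF).  T_m(A): upper triangular m x m matrices with entries in A.\<close>
definition Tmat :: "nat \<Rightarrow> 'a::comm_ring_1 set \<Rightarrow> 'a mat set" where
  "Tmat m A = {C \<in> carrier_mat m m. upper_triangular C \<and> (\<forall>i<m. \<forall>j<m. C $$ (i,j) \<in> A)}"

definition is_subring :: "'a::comm_ring_1 set \<Rightarrow> bool" where
  "is_subring S \<longleftrightarrow> 0 \<in> S \<and> 1 \<in> S \<and> (\<forall>a\<in>S. \<forall>b\<in>S. a + b \<in> S \<and> - a \<in> S \<and> a * b \<in> S)"

definition is_ideal_of :: "'a::comm_ring_1 set \<Rightarrow> 'a set \<Rightarrow> bool" where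
  "is_ideal_of I S \<longleftrightarrow> I \<subseteq> S \<and> 0 \<in> I \<and> (\<forall>a\<in>I. \<forall>b\<in>I. a + b \<in> I \<and> - a \<in> I)
      \<and> (\<forall>s\<in>S. \<forall>a\<in>I. s * a \<in> I)"

definition mat_eval :: "nat \<Rightarrow> 'a::comm_ring_1 poly \<Rightarrow> 'a mat \<Rightarrow> 'a mat" where
  "mat_eval m g C = mat m m (\<lambda>(i,j). \<Sum>k\<le>degree g. coeff g k * (C ^\<^sub>m k) $$ (i,j))"

definition IntR :: "nat \<Rightarrow> 'a::comm_ring_1 set \<Rightarrow> 'a set \<Rightarrow> 'a poly set" where
  "IntR m S I = {g. \<forall>C\<in>Tmat m S. mat_eval m g C \<in> Tmat m I}"

text \<open>A polynomial f = sum_k F_k x^k over T_n(R) is represented by its coefficient list Fs.\<close>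
definition mpoly_in :: "nat \<Rightarrow> 'a::comm_ring_1 mat list \<Rightarrow> bool" where
  "mpoly_in n Fs \<longleftrightarrow> (\<forall>F\<in>set Fs. F \<in> Tmat n UNIV)"

definition eval_right :: "nat \<Rightarrow> 'a::comm_ring_1 mat list \<Rightarrow> 'a mat \<Rightarrow> 'a mat" where
  "eval_right n Fs C = mat n n (\<lambda>(i,j). \<Sum>k<length Fs. (Fs ! k * C ^\<^sub>m k) $$ (i,j))"

definition eval_left :: "nat \<Rightarrow> 'a::comm_ring_1 mat list \<Rightarrow> 'a mat \<Rightarrow> 'a mat" where
  "eval_left n Fs C = mat n n (\<lambda>(i,j). \<Sum>k<length Fs. (C ^\<^sub>m k * Fs ! k) $$ (i,j))"

definition entry_poly :: "'a::comm_ring_1 mat list \<Rightarrow> nat \<Rightarrow> nat \<Rightarrow> 'a poly" where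
  "entry_poly Fs i j = Poly (map (\<lambda>F. F $$ (i,j)) Fs)"

definition IntT :: "nat \<Rightarrow> 'a::comm_ring_1 set \<Rightarrow> 'a set \<Rightarrow> 'a mat list set" where
  "IntT n S I = {Fs. mpoly_in n Fs \<and> (\<forall>C\<in>Tmat n S. eval_right n Fs C \<in> Tmat n I)}"

definition IntT_left :: "nat \<Rightarrow> 'a::comm_ring_1 set \<Rightarrow> 'a set \<Rightarrow> 'a mat list set" where
  "IntT_left n S I = {Fs. mpoly_in n Fs \<and> (\<forall>C\<in>Tmat n S. eval_left n Fs C \<in> Tmat n I)}"

end

theory Submission
  imports Defs
begin

text \<open>
Write C_l for the trailing principal block of C (rows and columns l, ..., n-1). Powers of an
upper triangular matrix are upper triangular, and their trailing blocks are the powers of the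
trailing block; hence

  f(C)_(i,j) = sum_(l=i..j) f_il(C)_(l,j) = sum_(l=i..j) f_il(C_l)_(0,j-l).

If every f_il maps T_(n-l)(S) into T_(n-l)(I), each summand lies in I. Conversely, for D in
T_(n-l)(S) take C = diag(0_l, D): the summands with l' < l vanish, the one with l' = l is
f_il(D)_(0,j-l), and those with l' > l lie in I by downward induction on l. So the first row of
f_il(D) lies in I, which suffices because row p of f_il(D) is the first row of f_il(diag(D_p, 0)). Left substitution reduces to right
substitution through the anti-transpose A \<mapsto> (A_(n-1-j,n-1-i)), which reverses products,
preserves T_n(X) and turns f_ij into f_(n-1-j,n-1-i).
\<close>

definition add_subgroup :: "'a::ab_group_add set \<Rightarrow> bool" where
  "add_subgroup I \<longleftrightarrow> 0 \<in> I \<and> (\<forall>a\<in>I. \<forall>b\<in>I. a + b \<in> I \<and> - a \<in> I)"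

lemma add_subgroup_sum:
  assumes "add_subgroup I" "\<And>x. x \<in> A \<Longrightarrow> f x \<in> I"
  shows "sum f A \<in> I"
  using assms(2)
  by (induction A rule: infinite_finite_induct) (use assms(1) in \<open>auto simp: add_subgroup_def\<close>)

lemma add_subgroup_diff: "add_subgroup I \<Longrightarrow> a \<in> I \<Longrightarrow> b \<in> I \<Longrightarrow> a - b \<in> I"
  unfolding add_subgroup_def by (metis diff_conv_add_uminus)

lemma is_ideal_of_add_subgroup: "is_ideal_of I S \<Longrightarrow> add_subgroup I"
  unfolding is_ideal_of_def add_subgroup_def by blast

section \<open>Upper triangular matrices and their trailing blocks\<close>

lemma index_mult_mat_sum:
  assumes "A \<in> carrier_mat nr n" "B \<in> carrier_mat n nc" "i < nr" "j < nc"
  shows "(A * B) $$ (i,j) = (\<Sum>r<n. A $$ (i,r) * B $$ (r,j))"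
  using assms by (simp add: scalar_prod_def lessThan_atLeast0)

lemma index_mult_upper_triangular:
  assumes A: "A \<in> carrier_mat n n" "upper_triangular A"
    and B: "B \<in> carrier_mat n n" "upper_triangular B"
    and "i < n" "j < n"
  shows "(A * B) $$ (i,j) = (\<Sum>l=i..j. A $$ (i,l) * B $$ (l,j))"
proof -
  have "(A * B) $$ (i,j) = (\<Sum>l<n. A $$ (i,l) * B $$ (l,j))"
    by (rule index_mult_mat_sum) (use assms in auto)
  also have "\<dots> = (\<Sum>l=i..j. A $$ (i,l) * B $$ (l,j))"
    by (rule sum.mono_neutral_right) (use assms in \<open>auto simp: upper_triangularD\<close>)
  finally show ?thesis .
qed

lemma upper_triangular_mult:
  assumes "A \<in> carrier_mat n n" "upper_triangular A" "B \<in> carrier_mat n n" "upper_triangular B"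
  shows "upper_triangular (A * B)"
proof (rule upper_triangularI)
  fix i j assume "j < i" "i < dim_row (A * B)"
  then show "(A * B) $$ (i,j) = 0"
    using assms index_mult_upper_triangular[OF assms, of i j] by simp
qed

lemma upper_triangular_pow:
  assumes "A \<in> carrier_mat n n" "upper_triangular A"
  shows "upper_triangular (A ^\<^sub>m k)"
  by (induction k) (use assms in \<open>auto intro: upper_triangular_mult[of _ n]\<close>)

lemma TmatI:
  assumes "M \<in> carrier_mat n n" "0 \<in> X"
    and "\<And>i j. j < i \<Longrightarrow> i < n \<Longrightarrow> M $$ (i,j) = 0"
    and "\<And>i j. i \<le> j \<Longrightarrow> j < n \<Longrightarrow> M $$ (i,j) \<in> X"
  shows "M \<in> Tmat n X"
  using assms unfolding Tmat_def by (auto intro: upper_triangularI) (metis not_le)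

lemma TmatD:
  assumes "C \<in> Tmat n X"
  shows "C \<in> carrier_mat n n" "upper_triangular C" "\<And>i j. i < n \<Longrightarrow> j < n \<Longrightarrow> C $$ (i,j) \<in> X"
  using assms unfolding Tmat_def by auto

definition trailing_block :: "nat \<Rightarrow> 'a mat \<Rightarrow> 'a mat" where
  "trailing_block a C = mat (dim_row C - a) (dim_col C - a) (\<lambda>(p,q). C $$ (p + a, q + a))"

lemma trailing_block_carrier:
  "C \<in> carrier_mat m m \<Longrightarrow> trailing_block a C \<in> carrier_mat (m - a) (m - a)"
  unfolding trailing_block_def by simp

lemma index_trailing_block [simp]:
  "p < dim_row C - a \<Longrightarrow> q < dim_col C - a \<Longrightarrow> trailing_block a C $$ (p,q) = C $$ (p + a, q + a)"
  "dim_row (trailing_block a C) = dim_row C - a"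
  "dim_col (trailing_block a C) = dim_col C - a"
  unfolding trailing_block_def by auto

lemma trailing_block_mult:
  assumes A: "A \<in> carrier_mat m m" "upper_triangular A" and B: "B \<in> carrier_mat m m"
  shows "trailing_block a (A * B) = trailing_block a A * trailing_block a B"
proof (rule eq_matI)
  fix p q assume "p < dim_row (trailing_block a A * trailing_block a B)"
    "q < dim_col (trailing_block a A * trailing_block a B)"
  then have pq: "p + a < m" "q + a < m" using A B by auto
  have "(A * B) $$ (p + a, q + a) = (\<Sum>r<m. A $$ (p + a, r) * B $$ (r, q + a))"
    by (rule index_mult_mat_sum) (use A B pq in auto)
  also have "\<dots> = (\<Sum>r\<in>{a..<m}. A $$ (p + a, r) * B $$ (r, q + a))"
    by (rule sum.mono_neutral_right) (use A pq in \<open>auto simp: upper_triangularD\<close>)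
  also have "\<dots> = (\<Sum>r<m - a. A $$ (p + a, r + a) * B $$ (r + a, q + a))"
    using sum.shift_bounds_nat_ivl[of "\<lambda>r. A $$ (p + a, r) * B $$ (r, q + a)" 0 a "m - a"] pq
    by (simp add: lessThan_atLeast0)
  also have "\<dots> = (\<Sum>r<m - a. trailing_block a A $$ (p,r) * trailing_block a B $$ (r,q))"
    using A B pq by simp
  also have "\<dots> = (trailing_block a A * trailing_block a B) $$ (p,q)"
    by (rule index_mult_mat_sum[symmetric]) (use A B pq in \<open>auto intro: trailing_block_carrier\<close>)
  finally show "trailing_block a (A * B) $$ (p,q) = (trailing_block a A * trailing_block a B) $$ (p,q)"
    using A B pq by simp
qed (use A B in auto)

lemma trailing_block_pow:
  assumes "C \<in> carrier_mat m m" "upper_triangular C"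
  shows "trailing_block a (C ^\<^sub>m k) = trailing_block a C ^\<^sub>m k"
proof (induction k)
  case 0
  show ?case using assms by (intro eq_matI) auto
next
  case (Suc k)
  then show ?case
    using assms by (simp add: trailing_block_mult[of _ m] upper_triangular_pow)
qed

lemma trailing_block_Tmat: "C \<in> Tmat m X \<Longrightarrow> trailing_block a C \<in> Tmat (m - a) X"
  unfolding Tmat_def upper_triangular_def by auto

section \<open>Scalar polynomials evaluated at triangular matrices\<close>

lemma index_mat_eval:
  assumes "p < m" "q < m" "\<And>k. N \<le> k \<Longrightarrow> coeff g k = 0"
  shows "mat_eval m g C $$ (p,q) = (\<Sum>k<N. coeff g k * (C ^\<^sub>m k) $$ (p,q))"
proof -
  let ?t = "\<lambda>k. coeff g k * (C ^\<^sub>m k) $$ (p,q)"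
  have "mat_eval m g C $$ (p,q) = (\<Sum>k\<le>degree g. ?t k)"
    using assms unfolding mat_eval_def by simp
  also have "\<dots> = (\<Sum>k<max (Suc (degree g)) N. ?t k)"
    by (rule sum.mono_neutral_left) (auto simp: coeff_eq_0)
  also have "\<dots> = (\<Sum>k<N. ?t k)"
    by (rule sum.mono_neutral_right) (use assms in auto)
  finally show ?thesis .
qed

lemma dim_mat_eval [simp]:
  "dim_row (mat_eval m g C) = m" "dim_col (mat_eval m g C) = m"
  unfolding mat_eval_def by simp_all

lemma mat_eval_carrier: "mat_eval m g C \<in> carrier_mat m m"
  by (rule carrier_matI) simp_all

lemma mat_eval_upper_triangular:
  assumes "C \<in> carrier_mat m m" "upper_triangular C"
  shows "upper_triangular (mat_eval m g C)"
  using assms upper_triangular_pow[OF assms]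
  by (intro upper_triangularI) (simp add: mat_eval_def upper_triangularD)

lemma index_mat_eval_trailing_block:
  assumes "C \<in> carrier_mat m m" "upper_triangular C" "a \<le> q" "q < m"
  shows "mat_eval m g C $$ (a,q) = mat_eval (m - a) g (trailing_block a C) $$ (0, q - a)"
proof -
  have "(C ^\<^sub>m k) $$ (a,q) = (trailing_block a C ^\<^sub>m k) $$ (0, q - a)" for k
  proof -
    have "dim_row (C ^\<^sub>m k) = m" "dim_col (C ^\<^sub>m k) = m"
      using assms(1) by auto
    then show ?thesis
      using assms trailing_block_pow[OF assms(1,2), of a k, symmetric] by simp
  qed
  then show ?thesis
    using assms unfolding mat_eval_def by simp
qed

lemma mat_eval_four_block_diag:
  assumes A: "A \<in> carrier_mat n1 n1" and B: "B \<in> carrier_mat n2 n2"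
  shows "mat_eval (n1 + n2) g (four_block_mat A (0\<^sub>m n1 n2) (0\<^sub>m n2 n1) B)
       = four_block_mat (mat_eval n1 g A) (0\<^sub>m n1 n2) (0\<^sub>m n2 n1) (mat_eval n2 g B)"
proof (rule eq_matI)
  fix i j assume "i < dim_row (four_block_mat (mat_eval n1 g A) (0\<^sub>m n1 n2) (0\<^sub>m n2 n1) (mat_eval n2 g B))"
    "j < dim_col (four_block_mat (mat_eval n1 g A) (0\<^sub>m n1 n2) (0\<^sub>m n2 n1) (mat_eval n2 g B))"
  then have ij: "i < n1 + n2" "j < n1 + n2"
    by (simp_all add: mat_eval_def)
  have "(four_block_mat A (0\<^sub>m n1 n2) (0\<^sub>m n2 n1) B ^\<^sub>m k) $$ (i,j)
      = (if i < n1 then if j < n1 then (A ^\<^sub>m k) $$ (i,j) else 0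
         else if j < n1 then 0 else (B ^\<^sub>m k) $$ (i - n1, j - n1))" for k
    using ij A B by (simp add: pow_four_block_mat)
  then show "mat_eval (n1 + n2) g (four_block_mat A (0\<^sub>m n1 n2) (0\<^sub>m n2 n1) B) $$ (i,j)
      = four_block_mat (mat_eval n1 g A) (0\<^sub>m n1 n2) (0\<^sub>m n2 n1) (mat_eval n2 g B) $$ (i,j)"
    using ij by (simp add: mat_eval_def)
qed (simp_all add: mat_eval_def)

lemma four_block_diag_Tmat:
  assumes "A \<in> Tmat n1 X" "B \<in> Tmat n2 X" "0 \<in> X"
  shows "four_block_mat A (0\<^sub>m n1 n2) (0\<^sub>m n2 n1) B \<in> Tmat (n1 + n2) X"
proof -
  have "upper_triangular (four_block_mat A (0\<^sub>m n1 n2) (0\<^sub>m n2 n1) B)"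
    by (rule upper_triangular_four_block) (use TmatD assms in auto)
  then show ?thesis
    using assms unfolding Tmat_def by (auto simp: carrier_matD)
qed

section \<open>Right substitution\<close>

lemma coeff_entry_poly:
  "coeff (entry_poly Fs i j) k = (if k < length Fs then Fs ! k $$ (i,j) else 0)"
  unfolding entry_poly_def by (simp add: nth_default_def)

lemma index_eval_right:
  assumes C: "C \<in> carrier_mat n n" "upper_triangular C" and F: "mpoly_in n Fs"
    and ij: "i < n" "j < n"
  shows "eval_right n Fs C $$ (i,j) = (\<Sum>l=i..j. mat_eval n (entry_poly Fs i l) C $$ (l,j))"
proof -
  have F_k: "Fs ! k \<in> carrier_mat n n" "upper_triangular (Fs ! k)" if "k < length Fs" for k
    using F that unfolding mpoly_in_def Tmat_def by auto
  have "eval_right n Fs C $$ (i,j) = (\<Sum>k<length Fs. (Fs ! k * C ^\<^sub>m k) $$ (i,j))"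
    using ij unfolding eval_right_def by simp
  also have "\<dots> = (\<Sum>k<length Fs. \<Sum>l=i..j. Fs ! k $$ (i,l) * (C ^\<^sub>m k) $$ (l,j))"
    by (rule sum.cong[OF refl], rule index_mult_upper_triangular)
      (use F_k C upper_triangular_pow[OF C] ij in auto)
  also have "\<dots> = (\<Sum>l=i..j. \<Sum>k<length Fs. coeff (entry_poly Fs i l) k * (C ^\<^sub>m k) $$ (l,j))"
    by (subst sum.swap) (simp add: coeff_entry_poly)
  also have "\<dots> = (\<Sum>l=i..j. mat_eval n (entry_poly Fs i l) C $$ (l,j))"
    by (rule sum.cong[OF refl], rule index_mat_eval[symmetric])
      (use ij in \<open>auto simp: coeff_entry_poly\<close>)
  finally show ?thesis .
qed

lemma IntR_if_first_row:
  assumes S: "0 \<in> S" and I: "0 \<in> I"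
    and first_row: "\<And>D q. D \<in> Tmat m S \<Longrightarrow> q < m \<Longrightarrow> mat_eval m g D $$ (0,q) \<in> I"
  shows "g \<in> IntR m S I"
  unfolding IntR_def
proof (intro CollectI ballI TmatI[OF mat_eval_carrier I])
  fix D assume D: "D \<in> Tmat m S"
  show "mat_eval m g D $$ (p,q) = 0" if "q < p" "p < m" for p q
    using upper_triangularD[OF mat_eval_upper_triangular[OF TmatD(1,2)[OF D]]] that by simp
  show "mat_eval m g D $$ (p,q) \<in> I" if pq: "p \<le> q" "q < m" for p q
  proof -
    define E where "E = trailing_block p D"
    have E: "E \<in> Tmat (m - p) S"
      unfolding E_def by (rule trailing_block_Tmat[OF D])
    have zero: "0\<^sub>m p p \<in> Tmat p S"
      using S by (simp add: Tmat_def)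
    have m: "m - p + p = m"
      using pq by simp
    have "mat_eval m g D $$ (p,q) = mat_eval (m - p) g E $$ (0, q - p)"
      unfolding E_def by (rule index_mat_eval_trailing_block) (use TmatD[OF D] pq in auto)
    also have "\<dots> = mat_eval m g (four_block_mat E (0\<^sub>m (m - p) p) (0\<^sub>m p (m - p)) (0\<^sub>m p p)) $$ (0, q - p)"
      using mat_eval_four_block_diag[OF TmatD(1)[OF E], of "0\<^sub>m p p" p g] pq m by simp
    also have "\<dots> \<in> I"
      using first_row four_block_diag_Tmat[OF E zero S] pq m by simp
    finally show ?thesis .
  qed
qed

lemma IntT_if_entry_polys:
  assumes S: "0 \<in> S" and I: "add_subgroup I" and F: "mpoly_in n Fs"
    and f: "\<And>i j. i \<le> j \<Longrightarrow> j < n \<Longrightarrow> entry_poly Fs i j \<in> IntR (n - j) S I"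
  shows "Fs \<in> IntT n S I"
  unfolding IntT_def
proof (intro CollectI conjI F ballI TmatI)
  fix C assume C: "C \<in> Tmat n S"
  note C' = TmatD(1,2)[OF C]
  show "eval_right n Fs C \<in> carrier_mat n n"
    by (simp add: eval_right_def)
  show "0 \<in> I"
    using I by (simp add: add_subgroup_def)
  show "eval_right n Fs C $$ (i,j) = 0" if "j < i" "i < n" for i j
    using index_eval_right[OF C' F] that by simp
  show "eval_right n Fs C $$ (i,j) \<in> I" if ij: "i \<le> j" "j < n" for i j
    unfolding index_eval_right[OF C' F order.strict_trans1[OF ij] ij(2)]
  proof (rule add_subgroup_sum[OF I])
    fix l assume l: "l \<in> {i..j}"
    have "mat_eval n (entry_poly Fs i l) C $$ (l,j)
        = mat_eval (n - l) (entry_poly Fs i l) (trailing_block l C) $$ (0, j - l)"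
      by (rule index_mat_eval_trailing_block[OF C']) (use l ij in auto)
    also have "\<dots> \<in> I"
    proof (rule TmatD(3))
      show "mat_eval (n - l) (entry_poly Fs i l) (trailing_block l C) \<in> Tmat (n - l) I"
        using f[of i l] trailing_block_Tmat[OF C, of l] l ij unfolding IntR_def by auto
    qed (use l ij in auto)
    finally show "mat_eval n (entry_poly Fs i l) C $$ (l,j) \<in> I" .
  qed
qed

lemma sum_split_at:
  fixes t :: "nat \<Rightarrow> 'a::comm_monoid_add"
  assumes "i \<le> l" "l \<le> j"
  shows "sum t {i..j} = sum t {i..<l} + t l + sum t {l<..j}"
proof -
  have "{i..j} = insert l ({i..<l} \<union> {l<..j})"
    using assms by auto
  moreover have "sum t ({i..<l} \<union> {l<..j}) = sum t {i..<l} + sum t {l<..j}"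
    by (rule sum.union_disjoint) auto
  ultimately show ?thesis
    by (simp add: ac_simps)
qed

lemma index_eval_right_zero_padded:
  assumes D: "D \<in> carrier_mat (n - l) (n - l)" "upper_triangular D" and F: "mpoly_in n Fs"
    and il: "i \<le> l" "l < n" and c: "c < n - l"
    and C: "C = four_block_mat (0\<^sub>m l l) (0\<^sub>m l (n - l)) (0\<^sub>m (n - l) l) D"
  shows "eval_right n Fs C $$ (i, l + c) = mat_eval (n - l) (entry_poly Fs i l) D $$ (0, c)
    + (\<Sum>l'\<in>{l<..l + c}. mat_eval n (entry_poly Fs i l') C $$ (l', l + c))"
proof -
  let ?t = "\<lambda>l'. mat_eval n (entry_poly Fs i l') C $$ (l', l + c)"
  have n: "l + (n - l) = n"
    using il by simp
  have C_carrier: "C \<in> carrier_mat n n"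
    using D n unfolding C by (metis four_block_carrier_mat zero_carrier_mat)
  have C_ut: "upper_triangular C"
    unfolding C by (rule upper_triangular_four_block) (use D in auto)
  have block: "mat_eval n g C = four_block_mat (mat_eval l g (0\<^sub>m l l)) (0\<^sub>m l (n - l))
      (0\<^sub>m (n - l) l) (mat_eval (n - l) g D)" for g
    using mat_eval_four_block_diag[of "0\<^sub>m l l" l D "n - l" g] D(1) n unfolding C by simp
  have "eval_right n Fs C $$ (i, l + c) = sum ?t {i..l + c}"
    by (rule index_eval_right[OF C_carrier C_ut F]) (use il c in auto)
  also have "\<dots> = sum ?t {i..<l} + ?t l + sum ?t {l<..l + c}"
    by (rule sum_split_at) (use il in auto)
  also have "sum ?t {i..<l} = 0"
    using block il c by (intro sum.neutral) simp
  also have "?t l = mat_eval (n - l) (entry_poly Fs i l) D $$ (0, c)"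
    using block il c by simp
  finally show ?thesis
    by simp
qed

lemma entry_polys_if_IntT:
  assumes S: "0 \<in> S" and I: "add_subgroup I" and F: "mpoly_in n Fs" and f: "Fs \<in> IntT n S I"
  shows "i \<le> l \<Longrightarrow> l < n \<Longrightarrow> entry_poly Fs i l \<in> IntR (n - l) S I"
proof (induction "n - l" arbitrary: i l rule: less_induct)
  case less
  show ?case
  proof (rule IntR_if_first_row)
    fix D c assume D: "D \<in> Tmat (n - l) S" and c: "c < n - l"
    define C where "C = four_block_mat (0\<^sub>m l l) (0\<^sub>m l (n - l)) (0\<^sub>m (n - l) l) D"
    let ?t = "\<lambda>l'. mat_eval n (entry_poly Fs i l') C $$ (l', l + c)"
    have "0\<^sub>m l l \<in> Tmat l S"
      using S by (simp add: Tmat_def)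
    moreover have "l + (n - l) = n"
      using less.prems by simp
    ultimately have CT: "C \<in> Tmat n S"
      using four_block_diag_Tmat[OF _ D S] unfolding C_def by metis
    note decomp = index_eval_right_zero_padded[OF TmatD(1,2)[OF D] F less.prems c C_def]
    have "eval_right n Fs C \<in> Tmat n I"
      using f CT unfolding IntT_def by blast
    then have "eval_right n Fs C $$ (i, l + c) \<in> I"
      by (rule TmatD(3)) (use less.prems c in auto)
    moreover have "sum ?t {l<..l + c} \<in> I"
    proof (rule add_subgroup_sum[OF I])
      fix l' assume l': "l' \<in> {l<..l + c}"
      have "?t l' = mat_eval (n - l') (entry_poly Fs i l') (trailing_block l' C) $$ (0, l + c - l')"
        by (rule index_mat_eval_trailing_block[OF TmatD(1,2)[OF CT]]) (use l' c in auto)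
      also have "\<dots> \<in> I"
      proof (rule TmatD(3))
        show "mat_eval (n - l') (entry_poly Fs i l') (trailing_block l' C) \<in> Tmat (n - l') I"
          using less l' c trailing_block_Tmat[OF CT, of l'] unfolding IntR_def by auto
      qed (use l' c in auto)
      finally show "?t l' \<in> I" .
    qed
    ultimately have "eval_right n Fs C $$ (i, l + c) - sum ?t {l<..l + c} \<in> I"
      by (rule add_subgroup_diff[OF I])
    then show "mat_eval (n - l) (entry_poly Fs i l) D $$ (0, c) \<in> I"
      by (simp add: decomp)
  qed (use S I in \<open>simp_all add: add_subgroup_def\<close>)
qed

lemma IntT_iff_entry_polys:
  assumes "0 \<in> S" "add_subgroup I" "mpoly_in n Fs"
  shows "Fs \<in> IntT n S I \<longleftrightarrow>
    (\<forall>i j. i \<le> j \<and> j < n \<longrightarrow> entry_poly Fs i j \<in> IntR (n - j) S I)"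
  using IntT_if_entry_polys[OF assms] entry_polys_if_IntT[OF assms] by blast

section \<open>Left substitution\<close>

definition anti_transpose :: "nat \<Rightarrow> 'a mat \<Rightarrow> 'a mat" where
  "anti_transpose n A = mat n n (\<lambda>(i,j). A $$ (n - 1 - j, n - 1 - i))"

lemma anti_transpose_carrier [simp]: "anti_transpose n A \<in> carrier_mat n n"
  unfolding anti_transpose_def by simp

lemma index_anti_transpose [simp]:
  "i < n \<Longrightarrow> j < n \<Longrightarrow> anti_transpose n A $$ (i,j) = A $$ (n - 1 - j, n - 1 - i)"
  "dim_row (anti_transpose n A) = n" "dim_col (anti_transpose n A) = n"
  unfolding anti_transpose_def by auto

lemma anti_transpose_anti_transpose:
  "A \<in> carrier_mat n n \<Longrightarrow> anti_transpose n (anti_transpose n A) = A"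
  by (rule eq_matI) auto

lemma anti_transpose_mult:
  fixes A B :: "'a::comm_semiring_0 mat"
  assumes A: "A \<in> carrier_mat n n" and B: "B \<in> carrier_mat n n"
  shows "anti_transpose n (A * B) = anti_transpose n B * anti_transpose n A"
proof (rule eq_matI)
  fix i j assume "i < dim_row (anti_transpose n B * anti_transpose n A)"
    "j < dim_col (anti_transpose n B * anti_transpose n A)"
  then have ij: "i < n" "j < n"
    by simp_all
  have "anti_transpose n (A * B) $$ (i,j) = (\<Sum>r<n. A $$ (n - 1 - j, r) * B $$ (r, n - 1 - i))"
    using ij index_mult_mat_sum[OF A B, of "n - 1 - j" "n - 1 - i"] by simp
  also have "\<dots> = (\<Sum>r<n. B $$ (n - 1 - r, n - 1 - i) * A $$ (n - 1 - j, n - 1 - r))"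
    by (rule sum.reindex_bij_witness[of _ "\<lambda>r. n - 1 - r" "\<lambda>r. n - 1 - r"]) (auto simp: mult.commute)
  also have "\<dots> = (\<Sum>r<n. anti_transpose n B $$ (i,r) * anti_transpose n A $$ (r,j))"
    using ij by simp
  also have "\<dots> = (anti_transpose n B * anti_transpose n A) $$ (i,j)"
    by (rule index_mult_mat_sum[symmetric]) (use ij in auto)
  finally show "anti_transpose n (A * B) $$ (i,j) = (anti_transpose n B * anti_transpose n A) $$ (i,j)" .
qed auto

lemma pow_mat_Suc_left:
  assumes "A \<in> carrier_mat n n"
  shows "A ^\<^sub>m Suc k = A * A ^\<^sub>m k"
proof (induction k)
  case (Suc k)
  have "A ^\<^sub>m Suc (Suc k) = A ^\<^sub>m Suc k * A"
    by (rule pow_mat.simps(2))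
  also have "\<dots> = (A * A ^\<^sub>m k) * A"
    by (simp only: Suc)
  also have "\<dots> = A * (A ^\<^sub>m k * A)"
    using assms by (simp add: assoc_mult_mat[of _ n n _ n _ n])
  finally show ?case
    by simp
qed (use assms in simp)

lemma anti_transpose_pow:
  fixes A :: "'a::comm_semiring_1 mat"
  assumes "A \<in> carrier_mat n n"
  shows "anti_transpose n (A ^\<^sub>m k) = anti_transpose n A ^\<^sub>m k"
proof (induction k)
  case 0
  show ?case
    using assms by (intro eq_matI) auto
next
  case (Suc k)
  have "anti_transpose n (A ^\<^sub>m Suc k) = anti_transpose n A * anti_transpose n (A ^\<^sub>m k)"
    using assms by (simp add: anti_transpose_mult[of _ n])
  also have "\<dots> = anti_transpose n A ^\<^sub>m Suc k"
    by (simp only: Suc pow_mat_Suc_left[OF anti_transpose_carrier])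
  finally show ?case .
qed

lemma anti_transpose_Tmat:
  assumes "A \<in> Tmat n X"
  shows "anti_transpose n A \<in> Tmat n X"
  using TmatD[OF assms] unfolding Tmat_def upper_triangular_def by auto

lemma eval_left_anti_transpose:
  assumes C: "C \<in> carrier_mat n n" and F: "mpoly_in n Fs"
  shows "anti_transpose n (eval_left n Fs C) = eval_right n (map (anti_transpose n) Fs) (anti_transpose n C)"
proof (rule eq_matI)
  have F_k: "Fs ! k \<in> carrier_mat n n" if "k < length Fs" for k
    using F that unfolding mpoly_in_def Tmat_def by auto
  fix i j assume "i < dim_row (eval_right n (map (anti_transpose n) Fs) (anti_transpose n C))"
    "j < dim_col (eval_right n (map (anti_transpose n) Fs) (anti_transpose n C))"
  then have ij: "i < n" "j < n"
    by (simp_all add: eval_right_def)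
  have summand: "(C ^\<^sub>m k * Fs ! k) $$ (n - 1 - j, n - 1 - i)
      = (map (anti_transpose n) Fs ! k * anti_transpose n C ^\<^sub>m k) $$ (i,j)"
    if "k \<in> {..<length Fs}" for k
  proof -
    have "(C ^\<^sub>m k * Fs ! k) $$ (n - 1 - j, n - 1 - i) = anti_transpose n (C ^\<^sub>m k * Fs ! k) $$ (i,j)"
      by (rule index_anti_transpose(1)[OF ij, symmetric])
    also have "\<dots> = (map (anti_transpose n) Fs ! k * anti_transpose n C ^\<^sub>m k) $$ (i,j)"
      using C F_k that by (simp add: anti_transpose_mult[of _ n] anti_transpose_pow)
    finally show ?thesis .
  qed
  have "anti_transpose n (eval_left n Fs C) $$ (i,j)
      = (\<Sum>k<length Fs. (C ^\<^sub>m k * Fs ! k) $$ (n - 1 - j, n - 1 - i))"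
    using ij by (simp add: eval_left_def)
  also have "\<dots> = (\<Sum>k<length Fs. (map (anti_transpose n) Fs ! k * anti_transpose n C ^\<^sub>m k) $$ (i,j))"
    using summand by (rule sum.cong[OF refl])
  also have "\<dots> = eval_right n (map (anti_transpose n) Fs) (anti_transpose n C) $$ (i,j)"
    using ij by (simp add: eval_right_def)
  finally show "anti_transpose n (eval_left n Fs C) $$ (i,j)
      = eval_right n (map (anti_transpose n) Fs) (anti_transpose n C) $$ (i,j)" .
qed (simp_all add: eval_right_def)

lemma mpoly_in_anti_transpose: "mpoly_in n Fs \<Longrightarrow> mpoly_in n (map (anti_transpose n) Fs)"
  unfolding mpoly_in_def by (auto intro: anti_transpose_Tmat)

lemma entry_poly_anti_transpose:
  "i < n \<Longrightarrow> j < n \<Longrightarrow> entry_poly (map (anti_transpose n) Fs) i j = entry_poly Fs (n - 1 - j) (n - 1 - i)"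
  unfolding entry_poly_def by (simp add: o_def)

lemma IntT_left_iff_IntT_anti_transpose:
  assumes F: "mpoly_in n Fs"
  shows "Fs \<in> IntT_left n S I \<longleftrightarrow> map (anti_transpose n) Fs \<in> IntT n S I"
proof
  assume H: "Fs \<in> IntT_left n S I"
  show "map (anti_transpose n) Fs \<in> IntT n S I"
    unfolding IntT_def
  proof (intro CollectI conjI mpoly_in_anti_transpose[OF F] ballI)
    fix C assume C: "C \<in> Tmat n S"
    have "eval_left n Fs (anti_transpose n C) \<in> Tmat n I"
      using H anti_transpose_Tmat[OF C] unfolding IntT_left_def by blast
    then have "anti_transpose n (eval_left n Fs (anti_transpose n C)) \<in> Tmat n I"
      by (rule anti_transpose_Tmat)
    then show "eval_right n (map (anti_transpose n) Fs) C \<in> Tmat n I"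
      by (simp add: eval_left_anti_transpose[OF anti_transpose_carrier F]
          anti_transpose_anti_transpose[OF TmatD(1)[OF C]])
  qed
next
  assume H: "map (anti_transpose n) Fs \<in> IntT n S I"
  show "Fs \<in> IntT_left n S I"
    unfolding IntT_left_def
  proof (intro CollectI conjI F ballI)
    fix C assume C: "C \<in> Tmat n S"
    have "eval_right n (map (anti_transpose n) Fs) (anti_transpose n C) \<in> Tmat n I"
      using H anti_transpose_Tmat[OF C] unfolding IntT_def by blast
    then have "anti_transpose n (anti_transpose n (eval_left n Fs C)) \<in> Tmat n I"
      by (simp add: eval_left_anti_transpose[OF TmatD(1)[OF C] F] anti_transpose_Tmat)
    moreover have "eval_left n Fs C \<in> carrier_mat n n"
      by (rule carrier_matI) (simp_all add: eval_left_def)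
    ultimately show "eval_left n Fs C \<in> Tmat n I"
      by (simp add: anti_transpose_anti_transpose)
  qed
qed

lemma all_pairs_reflect:
  fixes n :: nat and P :: "nat \<Rightarrow> nat \<Rightarrow> nat \<Rightarrow> bool"
  shows "(\<forall>i j. i \<le> j \<and> j < n \<longrightarrow> P (n - 1 - j) (n - 1 - i) (n - j))
      \<longleftrightarrow> (\<forall>i j. i \<le> j \<and> j < n \<longrightarrow> P i j (i + 1))"
proof safe
  fix i j assume H: "\<forall>i j. i \<le> j \<and> j < n \<longrightarrow> P (n - 1 - j) (n - 1 - i) (n - j)" "i \<le> j" "j < n"
  have "P (n - 1 - (n - 1 - i)) (n - 1 - (n - 1 - j)) (n - (n - 1 - i))"
    by (rule H(1)[rule_format]) (use H(2,3) in auto)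
  moreover have "n - 1 - (n - 1 - i) = i" "n - 1 - (n - 1 - j) = j" "n - (n - 1 - i) = i + 1"
    using H by auto
  ultimately show "P i j (i + 1)"
    by metis
next
  fix i j assume H: "\<forall>i j. i \<le> j \<and> j < n \<longrightarrow> P i j (i + 1)" "i \<le> j" "j < n"
  have "P (n - 1 - j) (n - 1 - i) (n - 1 - j + 1)"
    by (rule H(1)[rule_format]) (use H(2,3) in auto)
  moreover have "n - 1 - j + 1 = n - j"
    using H by auto
  ultimately show "P (n - 1 - j) (n - 1 - i) (n - j)"
    by metis
qed

lemma IntT_left_iff_entry_polys:
  assumes "0 \<in> S" "add_subgroup I" "mpoly_in n Fs"
  shows "Fs \<in> IntT_left n S I \<longleftrightarrow>
    (\<forall>i j. i \<le> j \<and> j < n \<longrightarrow> entry_poly Fs i j \<in> IntR (i + 1) S I)"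
proof -
  have "Fs \<in> IntT_left n S I \<longleftrightarrow> map (anti_transpose n) Fs \<in> IntT n S I"
    by (rule IntT_left_iff_IntT_anti_transpose[OF assms(3)])
  also have "\<dots> \<longleftrightarrow>
      (\<forall>i j. i \<le> j \<and> j < n \<longrightarrow> entry_poly (map (anti_transpose n) Fs) i j \<in> IntR (n - j) S I)"
    by (rule IntT_iff_entry_polys[OF assms(1,2) mpoly_in_anti_transpose[OF assms(3)]])
  also have "\<dots> \<longleftrightarrow>
      (\<forall>i j. i \<le> j \<and> j < n \<longrightarrow> entry_poly Fs (n - 1 - j) (n - 1 - i) \<in> IntR (n - j) S I)"
    by (simp add: entry_poly_anti_transpose cong: imp_cong)
  also have "\<dots> \<longleftrightarrow> (\<forall>i j. i \<le> j \<and> j < n \<longrightarrow> entry_poly Fs i j \<in> IntR (i + 1) S I)"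
    by (rule all_pairs_reflect[of n "\<lambda>i j m. entry_poly Fs i j \<in> IntR m S I"])
  finally show ?thesis .
qed

theorem theorem4p2:
  fixes S I :: "'a::comm_ring_1 set" and n :: nat and Fs :: "'a mat list"
  assumes "is_subring S" and "is_ideal_of I S" and "n \<ge> 1" and "mpoly_in n Fs"
  shows "(Fs \<in> IntT n S I \<longleftrightarrow>
           (\<forall>i j. i \<le> j \<and> j < n \<longrightarrow> entry_poly Fs i j \<in> IntR (n - j) S I))
       \<and> (Fs \<in> IntT_left n S I \<longleftrightarrow>
           (\<forall>i j. i \<le> j \<and> j < n \<longrightarrow> entry_poly Fs i j \<in> IntR (i + 1) S I))"
proof -
  have S: "0 \<in> S"
    using assms(1) by (simp add: is_subring_def)
  have I: "add_subgroup I"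
    using assms(2) by (rule is_ideal_of_add_subgroup)
  show ?thesis
    using IntT_iff_entry_polys[OF S I assms(4)] IntT_left_iff_entry_polys[OF S I assms(4)]
    by (rule conjI)
qed

end
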